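(* Let $R$ be a commutative ring with unit and let $G$ be a group with an upper central series $1=G_0\subset G_1\subset\cdots\subset G_n=G$ (so $G_i/G_{i-1}=Z(G/G_{i-1})$). If $G$ is $R$-torsion-free, then each factor group $G_i/G_{i-1}$, $i=1,\dots,n$, is $R$-torsion-free.
   Context: A group $G$ is $R$-torsion-free if for every finite subgroup $H\le G$, $|H|\cdot 1_R$ is invertible in $R$; equivalently, for every prime $p$ such that $G$ has a non-identity element $g$ with $g^p=1$, $p\cdot 1_R$ is invertible in $R$. *)

theory Defs
  imports "HOL-Algebra.Algebra"
begin

definition grp_center :: "('a, 'b) monoid_scheme \<Rightarrow> 'a set" where
  "grp_center G = {z \<in> carrier G. \<forall>x \<in> carrier G. z \<otimes>\<^bsub>G\<^esub> x = x \<otimes>\<^bsub>G\<^esub> z}"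

fun upper_central :: "('a, 'b) monoid_scheme \<Rightarrow> nat \<Rightarrow> 'a set" where
  "upper_central G 0 = {\<one>\<^bsub>G\<^esub>}"
| "upper_central G (Suc i) =
     {g \<in> carrier G. upper_central G i #>\<^bsub>G\<^esub> g \<in> grp_center (G Mod upper_central G i)}"

definition R_torsion_free :: "('r, 'c) ring_scheme \<Rightarrow> ('a, 'b) monoid_scheme \<Rightarrow> bool" where
  "R_torsion_free R G \<longleftrightarrow>
     (\<forall>H. subgroup H G \<and> finite H \<longrightarrow> add_pow R (card H) \<one>\<^bsub>R\<^esub> \<in> Units R)"

end

theory Submission
  imports Defs
begin

text \<open>Write Z_i for the terms of the upper central series and suppose G has no element of
  order p. If g \<in> Z_(i+1) and g^p \<in> Z_i, then g \<in> Z_i: for every y the commutator [g, y] lies in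
  Z_i, hence is central modulo Z_(i-1), so [g, y]^p \<equiv> [g^p, y] \<equiv> 1 modulo Z_(i-1), and [g, y] \<in> Z_(i-1)
  by induction on i. Thus an element of order p in Z_(i+1)/Z_i yields one in G. Since
  R-torsion-freeness of a group only depends on the primes p for which it has elements of
  order p (by Cauchy's theorem, obtained here from Sylow's), it passes from G to each factor.\<close>

definition commutator :: "('a, 'b) monoid_scheme \<Rightarrow> 'a \<Rightarrow> 'a \<Rightarrow> 'a" where
  "commutator G a b = a \<otimes>\<^bsub>G\<^esub> b \<otimes>\<^bsub>G\<^esub> inv\<^bsub>G\<^esub> a \<otimes>\<^bsub>G\<^esub> inv\<^bsub>G\<^esub> b"

context group
begin

lemma inv_mult_cancel_left [simp]:
  "x \<in> carrier G \<Longrightarrow> y \<in> carrier G \<Longrightarrow> inv x \<otimes> (x \<otimes> y) = y"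
  by (simp flip: m_assoc)

lemma mult_inv_cancel_left [simp]:
  "x \<in> carrier G \<Longrightarrow> y \<in> carrier G \<Longrightarrow> x \<otimes> (inv x \<otimes> y) = y"
  by (simp flip: m_assoc)

lemma commutator_closed [simp]:
  "a \<in> carrier G \<Longrightarrow> b \<in> carrier G \<Longrightarrow> commutator G a b \<in> carrier G"
  by (simp add: commutator_def)

lemma commutator_eq_one_iff:
  assumes "a \<in> carrier G" "b \<in> carrier G"
  shows "commutator G a b = \<one> \<longleftrightarrow> a \<otimes> b = b \<otimes> a"
proof -
  have "commutator G a b = (a \<otimes> b) \<otimes> inv (b \<otimes> a)"
    using assms by (simp add: commutator_def inv_mult_group m_assoc)
  then show ?thesis
    using assms by (simp add: inv_solve_right')
qed

lemma commutator_pow: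
  assumes a: "a \<in> carrier G" and b: "b \<in> carrier G"
    and comm: "commutator G a b \<otimes> a = a \<otimes> commutator G a b"
  shows "commutator G (a [^] (k::nat)) b = commutator G a b [^] k"
proof (induction k)
  case 0
  then show ?case using b by (simp add: commutator_def)
next
  case (Suc k)
  let ?c = "commutator G a b"
  have "commutator G (a [^] Suc k) b = a [^] k \<otimes> ?c \<otimes> inv (a [^] k) \<otimes> commutator G (a [^] k) b"
    using a b by (simp add: commutator_def m_assoc inv_mult_group)
  also have "a [^] k \<otimes> ?c = ?c \<otimes> a [^] k"
    using group_commutes_pow[OF comm[symmetric]] a b by simp
  also have "?c \<otimes> a [^] k \<otimes> inv (a [^] k) \<otimes> commutator G (a [^] k) b = ?c \<otimes> ?c [^] k"
    using a b by (simp add: Suc.IH m_assoc)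
  finally show ?case
    by (simp only: nat_pow_Suc2[OF commutator_closed[OF a b]])
qed

lemma grp_center_normal: "grp_center G \<lhd> G"
proof (rule normal_invI)
  show "subgroup (grp_center G) G"
  proof (rule subgroupI)
    show "inv z \<in> grp_center G" if z: "z \<in> grp_center G" for z
    proof -
      have "inv z \<otimes> x = x \<otimes> inv z" if x: "x \<in> carrier G" for x
      proof -
        have zc: "z \<in> carrier G" and zx: "z \<otimes> x = x \<otimes> z"
          using z x unfolding grp_center_def by blast+
        have "inv z \<otimes> x = inv z \<otimes> (x \<otimes> z) \<otimes> inv z"
          using zc x by (simp add: m_assoc)
        also have "\<dots> = x \<otimes> inv z"
          using zc x by (simp flip: zx add: m_assoc)
        finally show ?thesis .
      qed
      then show ?thesis
        using z unfolding grp_center_def by blast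
    qed
    show "a \<otimes> b \<in> grp_center G" if a: "a \<in> grp_center G" and b: "b \<in> grp_center G" for a b
    proof -
      have "a \<otimes> b \<otimes> x = x \<otimes> (a \<otimes> b)" if x: "x \<in> carrier G" for x
      proof -
        have ac: "a \<in> carrier G" and ax: "a \<otimes> x = x \<otimes> a"
          using a x unfolding grp_center_def by blast+
        have bc: "b \<in> carrier G" and bx: "b \<otimes> x = x \<otimes> b"
          using b x unfolding grp_center_def by blast+
        have "a \<otimes> b \<otimes> x = a \<otimes> x \<otimes> b"
          using ac bc x by (simp add: m_assoc bx)
        also have "\<dots> = x \<otimes> (a \<otimes> b)"
          using ac bc x by (simp add: m_assoc ax)
        finally show ?thesis .
      qed
      then show ?thesis
        using a b unfolding grp_center_def by blast
    qed
  qed (auto simp: grp_center_def)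
  show "x \<otimes> z \<otimes> inv x \<in> grp_center G" if "x \<in> carrier G" "z \<in> grp_center G" for x z
  proof -
    have "z \<in> carrier G" and "z \<otimes> x = x \<otimes> z"
      using that unfolding grp_center_def by blast+
    then have "x \<otimes> z \<otimes> inv x = z"
      using that(1) by (metis inv_solve_right' m_closed)
    then show ?thesis
      using that(2) by simp
  qed
qed
end

lemma (in group_hom) hom_commutator:
  "a \<in> carrier G \<Longrightarrow> b \<in> carrier G \<Longrightarrow> h (commutator G a b) = commutator H (h a) (h b)"
  by (simp add: commutator_def)

lemma (in group_hom) normal_vimage:
  assumes "N \<lhd> H"
  shows "{x \<in> carrier G. h x \<in> N} \<lhd> G"
proof -
  interpret N: normal N H by fact
  show ?thesis
  proof (rule G.normal_invI)
    show "subgroup {x \<in> carrier G. h x \<in> N} G"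
      by (rule G.subgroupI) (auto simp: N.m_inv_closed N.m_closed)
    show "x \<otimes>\<^bsub>G\<^esub> z \<otimes>\<^bsub>G\<^esub> inv\<^bsub>G\<^esub> x \<in> {x \<in> carrier G. h x \<in> N}"
      if "x \<in> carrier G" "z \<in> {x \<in> carrier G. h x \<in> N}" for x z
      using that N.inv_op_closed2 by simp
  qed
qed

context normal
begin

lemma r_coset_group_hom: "group_hom G (G Mod H) (\<lambda>a. H #> a)"
  by (simp add: group_hom_def group_hom_axioms_def is_group factorgroup_is_group r_coset_hom_Mod)

lemma rcos_eq_self_iff: "x \<in> carrier G \<Longrightarrow> H #> x = H \<longleftrightarrow> x \<in> H"
  using coset_join1 coset_join2 is_subgroup by blast

lemma rcos_mem_grp_center_iff:
  assumes g: "g \<in> carrier G"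
  shows "H #> g \<in> grp_center (G Mod H) \<longleftrightarrow> (\<forall>y\<in>carrier G. commutator G g y \<in> H)"
proof -
  interpret \<pi>: group_hom G "G Mod H" "\<lambda>a. H #> a"
    by (rule r_coset_group_hom)
  have "H #> g \<in> grp_center (G Mod H) \<longleftrightarrow>
      (\<forall>y\<in>carrier G. (H #> g) \<otimes>\<^bsub>G Mod H\<^esub> (H #> y) = (H #> y) \<otimes>\<^bsub>G Mod H\<^esub> (H #> g))"
    using g unfolding grp_center_def carrier_FactGroup by blast
  also have "\<dots> \<longleftrightarrow> (\<forall>y\<in>carrier G. H #> commutator G g y = \<one>\<^bsub>G Mod H\<^esub>)"
    using g by (simp add: \<pi>.hom_commutator \<pi>.H.commutator_eq_one_iff del: mult_FactGroup one_FactGroup)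
  also have "\<dots> \<longleftrightarrow> (\<forall>y\<in>carrier G. commutator G g y \<in> H)"
    using g by (simp add: rcos_eq_self_iff)
  finally show ?thesis .
qed

end

context group
begin

lemma upper_central_normal: "upper_central G i \<lhd> G"
proof (induction i)
  case 0
  then show ?case by (simp add: one_is_normal)
next
  case (Suc i)
  interpret N: normal "upper_central G i" G by (rule Suc.IH)
  interpret \<pi>: group_hom G "G Mod upper_central G i" "\<lambda>a. upper_central G i #> a"
    by (rule N.r_coset_group_hom)
  show ?case
    using \<pi>.normal_vimage[OF \<pi>.H.grp_center_normal] by simp
qed

lemma mem_upper_central_Suc_iff:
  "g \<in> upper_central G (Suc i) \<longleftrightarrow>
    g \<in> carrier G \<and> (\<forall>y\<in>carrier G. commutator G g y \<in> upper_central G i)"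
  using normal.rcos_mem_grp_center_iff[OF upper_central_normal] by auto

lemma upper_central_subset_Suc: "upper_central G i \<subseteq> upper_central G (Suc i)"
proof
  fix g assume g: "g \<in> upper_central G i"
  interpret N: normal "upper_central G i" G by (rule upper_central_normal)
  have "g \<in> carrier G" using g N.subset by blast
  moreover have "upper_central G i #> g = \<one>\<^bsub>G Mod upper_central G i\<^esub>"
    using g \<open>g \<in> carrier G\<close> by (simp add: N.rcos_eq_self_iff)
  moreover have "\<one>\<^bsub>G Mod upper_central G i\<^esub> \<in> grp_center (G Mod upper_central G i)"
    using group.grp_center_normal[OF N.factorgroup_is_group] normal_imp_subgroup subgroup.one_closed
    by blast
  ultimately show "g \<in> upper_central G (Suc i)" by simp
qed

lemma upper_central_normal_in_Suc:
  "upper_central G i \<lhd> G\<lparr>carrier := upper_central G (Suc i)\<rparr>"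
  using normal_restrict_supergroup[OF normal_imp_subgroup upper_central_normal upper_central_subset_Suc]
    upper_central_normal by blast

lemma upper_central_mem_of_pow_mem:
  fixes p :: nat
  assumes no_torsion: "\<forall>h\<in>carrier G. h [^] p = \<one> \<longrightarrow> h = \<one>"
  shows "g \<in> upper_central G (Suc i) \<Longrightarrow> g [^] p \<in> upper_central G i \<Longrightarrow> g \<in> upper_central G i"
proof (induction i arbitrary: g)
  case 0
  have "g \<in> carrier G"
    using "0.prems"(1) mem_upper_central_Suc_iff by blast
  moreover have "g [^] p = \<one>"
    using "0.prems"(2) by simp
  ultimately have "g = \<one>"
    using no_torsion by blast
  then show ?case by simp
next
  case (Suc i)
  let ?N = "upper_central G i" and ?Q = "G Mod upper_central G i"
  interpret N: normal ?N G by (rule upper_central_normal)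
  interpret \<pi>: group_hom G ?Q "\<lambda>a. ?N #> a" by (rule N.r_coset_group_hom)
  have g: "g \<in> carrier G"
    using Suc.prems(1) mem_upper_central_Suc_iff by blast
  have "commutator G g y \<in> ?N" if y: "y \<in> carrier G" for y
  proof -
    let ?c = "commutator G g y"
    have "?c \<in> upper_central G (Suc i)"
      using Suc.prems(1) y mem_upper_central_Suc_iff by blast
    then have "?N #> ?c \<in> grp_center ?Q" by simp
    then have central: "commutator ?Q (?N #> g) (?N #> y) \<otimes>\<^bsub>?Q\<^esub> (?N #> g)
        = (?N #> g) \<otimes>\<^bsub>?Q\<^esub> commutator ?Q (?N #> g) (?N #> y)"
      using g y \<pi>.hom_closed[OF g] unfolding grp_center_def \<pi>.hom_commutator[OF g y] by blast
    have "commutator G (g [^] p) y \<in> ?N"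
      using Suc.prems(2) y mem_upper_central_Suc_iff by blast
    have "?N #> (?c [^] p) = commutator ?Q (?N #> g) (?N #> y) [^]\<^bsub>?Q\<^esub> p"
      using g y by (simp add: \<pi>.hom_commutator \<pi>.hom_nat_pow)
    also have "\<dots> = commutator ?Q ((?N #> g) [^]\<^bsub>?Q\<^esub> p) (?N #> y)"
      using g y central by (simp add: \<pi>.H.commutator_pow)
    also have "\<dots> = ?N #> commutator G (g [^] p) y"
      using g y by (simp add: \<pi>.hom_commutator \<pi>.hom_nat_pow)
    also have "\<dots> = ?N"
      using \<open>commutator G (g [^] p) y \<in> ?N\<close> g y by (simp add: N.rcos_eq_self_iff)
    finally have "?c [^] p \<in> ?N"
      using g y by (simp add: N.rcos_eq_self_iff)
    then show ?thesis
      using Suc.IH \<open>?c \<in> upper_central G (Suc i)\<close> by blast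
  qed
  then show ?case
    using g mem_upper_central_Suc_iff by blast
qed

lemma upper_central_quotient_torsion_imp_torsion:
  fixes p i :: nat
  defines "Q \<equiv> G\<lparr>carrier := upper_central G (Suc i)\<rparr> Mod upper_central G i"
  assumes q: "q \<in> carrier Q" "q \<noteq> \<one>\<^bsub>Q\<^esub>" "q [^]\<^bsub>Q\<^esub> p = \<one>\<^bsub>Q\<^esub>"
  shows "\<exists>g\<in>carrier G. g \<noteq> \<one> \<and> g [^] p = \<one>"
proof (rule ccontr)
  assume "\<not> ?thesis"
  then have no_torsion: "\<forall>h\<in>carrier G. h [^] p = \<one> \<longrightarrow> h = \<one>" by blast
  let ?M = "upper_central G (Suc i)" and ?N = "upper_central G i"
  interpret N: normal ?N G by (rule upper_central_normal)
  interpret NM: normal ?N "G\<lparr>carrier := ?M\<rparr>"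
    by (rule upper_central_normal_in_Suc)
  obtain g where g: "g \<in> ?M" and q_def: "q = ?N #> g"
    using q(1) unfolding Q_def carrier_FactGroup by (auto simp: r_coset_def)
  have gG: "g \<in> carrier G"
    using g mem_upper_central_Suc_iff by blast
  have "?N #> (g [^] p) = q [^]\<^bsub>Q\<^esub> p"
    using NM.FactGroup_pow[of g p] g unfolding Q_def q_def by (simp add: r_coset_def nat_pow_def)
  then have "g [^] p \<in> ?N"
    using q(3) gG unfolding Q_def by (simp add: N.rcos_eq_self_iff)
  then have "g \<in> ?N"
    using upper_central_mem_of_pow_mem[OF no_torsion g] by blast
  then show False
    using q(2) gG unfolding Q_def q_def by (simp add: N.rcos_eq_self_iff)
qed

end

lemma (in semiring) add_pow_one_mult:
  "add_pow R (m * n :: nat) \<one> = add_pow R m \<one> \<otimes> add_pow R n \<one>"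
  using add_pow_rdistr[of "add_pow R m \<one>" \<one> n] add.nat_pow_pow[of \<one> n m] by simp

lemma (in semiring) add_pow_one_Units_if_prime_divisors_Units:
  fixes n :: nat
  assumes "n > 0" "\<And>p. Factorial_Ring.prime p \<Longrightarrow> p dvd n \<Longrightarrow> add_pow R p \<one> \<in> Units R"
  shows "add_pow R n \<one> \<in> Units R"
  using assms
proof (induction n rule: prime_divisors_induct)
  case (factor p n)
  then have "add_pow R n \<one> \<in> Units R" and "add_pow R p \<one> \<in> Units R"
    by simp_all
  then show ?case
    by (simp add: add_pow_one_mult)
qed simp_all

lemma (in group) exists_elem_of_prime_order:
  assumes "finite (carrier G)" "Factorial_Ring.prime p" "p dvd order G"
  shows "\<exists>g\<in>carrier G. g \<noteq> \<one> \<and> g [^] p = \<one>"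
proof -
  have order: "order G = p ^ 1 * (order G div p)"
    using assms(3) by simp
  obtain S where S: "subgroup S G" "card S = p"
    using sylow_thm[OF assms(2) is_group order assms(1)] by auto
  have "\<not> S \<subseteq> {\<one>}"
  proof
    assume "S \<subseteq> {\<one>}"
    then have "card S \<le> 1"
      using card_mono[of "{\<one>}" S] by simp
    then show False
      using S(2) prime_gt_1_nat[OF assms(2)] by simp
  qed
  then obtain s where s: "s \<in> S" "s \<noteq> \<one>"
    by blast
  have "s [^]\<^bsub>G\<lparr>carrier := S\<rparr>\<^esub> order (G\<lparr>carrier := S\<rparr>) = \<one>\<^bsub>G\<lparr>carrier := S\<rparr>\<^esub>"
    using group.pow_order_eq_1[OF subgroup.subgroup_is_group[OF S(1) is_group], of s] s(1) by simp
  moreover have "order (G\<lparr>carrier := S\<rparr>) = p"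
    using S(2) unfolding order_def by simp
  ultimately have "s [^] p = \<one>"
    using nat_pow_consistent[of s p S] by simp
  then show ?thesis
    using subgroup.mem_carrier[OF S(1) s(1)] s(2) by blast
qed

lemma (in group) card_generate_of_prime_order:
  assumes "g \<in> carrier G" "g \<noteq> \<one>" "g [^] p = \<one>" "Factorial_Ring.prime p"
  shows "card (generate G {g}) = p"
proof -
  have "ord g dvd p"
    using pow_eq_id[OF assms(1)] assms(3) by simp
  moreover have "ord g \<noteq> 1"
    using ord_eq_1[OF assms(1)] assms(2) by simp
  ultimately have "ord g = p"
    using assms(4) by (meson prime_nat_iff)
  then show ?thesis
    using generate_pow_card[OF assms(1)] by simp
qed

lemma R_torsion_free_iff_prime_torsion_Units:
  assumes "group G" "semiring R"
  shows "R_torsion_free R G \<longleftrightarrow>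
    (\<forall>p::nat. Factorial_Ring.prime p \<and> (\<exists>g\<in>carrier G. g \<noteq> \<one>\<^bsub>G\<^esub> \<and> g [^]\<^bsub>G\<^esub> p = \<one>\<^bsub>G\<^esub>)
      \<longrightarrow> add_pow R p \<one>\<^bsub>R\<^esub> \<in> Units R)"
  (is "_ \<longleftrightarrow> ?prime_torsion_Units")
proof
  interpret G: group G by fact
  interpret R: semiring R by fact
  show "?prime_torsion_Units" if "R_torsion_free R G"
  proof (intro allI impI)
    fix p :: nat assume "Factorial_Ring.prime p \<and> (\<exists>g\<in>carrier G. g \<noteq> \<one>\<^bsub>G\<^esub> \<and> g [^]\<^bsub>G\<^esub> p = \<one>\<^bsub>G\<^esub>)"
    then obtain g where p: "Factorial_Ring.prime p" and g: "g \<in> carrier G" "g \<noteq> \<one>\<^bsub>G\<^esub>" "g [^]\<^bsub>G\<^esub> p = \<one>\<^bsub>G\<^esub>"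
      by blast
    have "subgroup (generate G {g}) G"
      using G.generate_is_subgroup g(1) by simp
    moreover have "card (generate G {g}) = p"
      using G.card_generate_of_prime_order[OF g p] .
    ultimately show "add_pow R p \<one>\<^bsub>R\<^esub> \<in> Units R"
      using that p prime_gt_0_nat card_ge_0_finite unfolding R_torsion_free_def by metis
  qed
  show "R_torsion_free R G" if prime_Units: "?prime_torsion_Units"
    unfolding R_torsion_free_def
  proof (intro allI impI)
    fix H assume H: "subgroup H G \<and> finite H"
    interpret H: group "G\<lparr>carrier := H\<rparr>"
      using H G.subgroup_imp_group by blast
    show "add_pow R (card H) \<one>\<^bsub>R\<^esub> \<in> Units R"
    proof (rule R.add_pow_one_Units_if_prime_divisors_Units)
      show "card H > 0"
        using H subgroup.one_closed card_gt_0_iff by blast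
      fix p :: nat assume p: "Factorial_Ring.prime p" "p dvd card H"
      then obtain g where "g \<in> H" "g \<noteq> \<one>\<^bsub>G\<^esub>" "g [^]\<^bsub>G\<^esub> p = \<one>\<^bsub>G\<^esub>"
        using H.exists_elem_of_prime_order H by (auto simp: order_def simp flip: G.nat_pow_consistent)
      then show "add_pow R p \<one>\<^bsub>R\<^esub> \<in> Units R"
        using prime_Units p H subgroup.mem_carrier by metis
    qed
  qed
qed

theorem lemma3p4:
  fixes R :: "('r, 'c) ring_scheme" and G :: "('a, 'b) monoid_scheme" and n :: nat
  assumes "cring R"
    and "group G"
    and "upper_central G n = carrier G"
    and "R_torsion_free R G"
  shows "\<forall>i \<in> {1..n}.
           R_torsion_free R ((G\<lparr>carrier := upper_central G i\<rparr>) Mod upper_central G (i - 1))"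
proof
  fix i assume "i \<in> {1..n}"
  then obtain j where i: "i = Suc j"
    by (cases i) auto
  interpret G: group G by fact
  interpret R: cring R by fact
  let ?Q = "G\<lparr>carrier := upper_central G (Suc j)\<rparr> Mod upper_central G j"
  have Q: "group ?Q"
    using normal.factorgroup_is_group[OF G.upper_central_normal_in_Suc] .
  have "R_torsion_free R ?Q"
    using assms(4) G.upper_central_quotient_torsion_imp_torsion
    unfolding R_torsion_free_iff_prime_torsion_Units[OF assms(2) R.semiring_axioms]
      R_torsion_free_iff_prime_torsion_Units[OF Q R.semiring_axioms]
    by blast
  then show "R_torsion_free R (G\<lparr>carrier := upper_central G i\<rparr> Mod upper_central G (i - 1))"
    using i by simp
qed

end
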